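(* Fix one of the following settings: (i) real polynomials in one variable $x$, with "distinguished set" the point $x=1$; (ii) real polynomials in two variables $x,y$, with distinguished set the line $x+y=1$; (iii) real polynomials in three variables $x,y,z$, with distinguished set the plane $x+y+z=1$. Call a polynomial good if it equals $1$ on the distinguished set, has only non-negative coefficients, and has zero constant term. Let $f$ be a good polynomial and $a$ a positive integer. Then there are good polynomials $g$ and $h$ with $N(g)=aN(f)$ and $N(h)=aN(f)-(a-1)$. Moreover, if $f$ is invariant under a finite group $\Gamma$ of diagonal unitary matrices acting on the variables (e.g. $x\mapsto \eta x$; $(x,y)\mapsto(\eta x,\eta y)$; $(x,y)\mapsto(\eta x,\eta^2y)$; $(x,y,z)\mapsto(\eta x,\eta^2 y,\eta^4z)$ for a root of unity $\eta$), then $g$ and $h$ may be chosen $\Gamma$-invariant.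
   Context: $N(f)$ denotes the number of distinct monomials with nonzero coefficient in $f$. A polynomial $f$ is $\Gamma$-invariant if $f(\gamma\mathbf{x})=f(\mathbf{x})$ for all $\gamma\in\Gamma$. *)

theory Defs
  imports Complex_Main "HOL-Library.Poly_Mapping"
begin

type_synonym rpoly = "(nat \<Rightarrow>\<^sub>0 nat) \<Rightarrow>\<^sub>0 real"

definition peval :: "rpoly \<Rightarrow> (nat \<Rightarrow> 'a::real_field) \<Rightarrow> 'a" where
  "peval p x = (\<Sum>mo\<in>Poly_Mapping.keys p. of_real (Poly_Mapping.lookup p mo) * (\<Prod>v\<in>Poly_Mapping.keys mo. x v ^ Poly_Mapping.lookup mo v))"

definition nmon :: "rpoly \<Rightarrow> nat" where
  "nmon p = card (Poly_Mapping.keys p)"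

definition in_vars :: "nat \<Rightarrow> rpoly \<Rightarrow> bool" where
  "in_vars n p \<longleftrightarrow> (\<forall>m\<in>Poly_Mapping.keys p. Poly_Mapping.keys m \<subseteq> {..<n})"

definition good :: "nat \<Rightarrow> rpoly \<Rightarrow> bool" where
  "good n p \<longleftrightarrow> in_vars n p
     \<and> (\<forall>x::nat \<Rightarrow> real. (\<Sum>i<n. x i) = 1 \<longrightarrow> peval p x = 1)
     \<and> (\<forall>m. Poly_Mapping.lookup p m \<ge> 0)
     \<and> Poly_Mapping.lookup p 0 = 0"

text \<open>Finite groups of diagonal unitary n x n matrices, a matrix being given by its
  diagonal (entries at indices \<ge> n are normalized to 1).\<close>
definition diag_unitary_group :: "nat \<Rightarrow> (nat \<Rightarrow> complex) set \<Rightarrow> bool" where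
  "diag_unitary_group n G \<longleftrightarrow> finite G
     \<and> (\<forall>g\<in>G. (\<forall>i<n. cmod (g i) = 1) \<and> (\<forall>i\<ge>n. g i = 1))
     \<and> (\<lambda>i. 1) \<in> G
     \<and> (\<forall>g\<in>G. \<forall>h\<in>G. (\<lambda>i. g i * h i) \<in> G)
     \<and> (\<forall>g\<in>G. (\<lambda>i. inverse (g i)) \<in> G)"

definition invariant :: "(nat \<Rightarrow> complex) set \<Rightarrow> rpoly \<Rightarrow> bool" where
  "invariant G p \<longleftrightarrow> (\<forall>g\<in>G. \<forall>x::nat \<Rightarrow> complex. peval p (\<lambda>i. g i * x i) = peval p x)"

end

theory Submission
  imports Defs "HOL-Computational_Algebra.Polynomial"
begin

(* Choose a monomial x^m of maximal total degree in f, with coefficient c > 0, and put M = l x^m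
   for 0 < l <= c. The partial tensor P' = (f - M) + M P preserves goodness: on the hyperplane it
   equals 1 - M + M = 1, and its coefficients stay non-negative. Iterating from P_0 = f, every
   monomial of x^m P_k has total degree above that of x^m, so the monomials of f - M and x^m P_k
   are disjoint and N(P_(k+1)) = N(f - M) + N(P_k). Since N(f - M) = N(f) for l = c/2 and
   N(f - M) = N(f) - 1 for l = c, after a - 1 steps we get a N(f) and a N(f) - (a - 1) monomials.
   If f is Gamma-invariant then, monomials being linearly independent, each monomial of f, in
   particular x^m, is Gamma-invariant, hence so is every P_k. *)

definition eval_monomial :: "(nat \<Rightarrow>\<^sub>0 nat) \<Rightarrow> (nat \<Rightarrow> 'a::comm_monoid_mult) \<Rightarrow> 'a" where
  "eval_monomial mo x = (\<Prod>v\<in>Poly_Mapping.keys mo. x v ^ Poly_Mapping.lookup mo v)"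

lemma eval_monomial_eq_prod:
  assumes "finite S" "Poly_Mapping.keys mo \<subseteq> S"
  shows "eval_monomial mo x = (\<Prod>v\<in>S. x v ^ Poly_Mapping.lookup mo v)"
  unfolding eval_monomial_def
  by (rule prod.mono_neutral_left) (use assms in \<open>auto simp: in_keys_iff\<close>)

lemma eval_monomial_add: "eval_monomial (a + b) x = eval_monomial a x * eval_monomial b x"
proof -
  let ?S = "Poly_Mapping.keys a \<union> Poly_Mapping.keys b"
  have "eval_monomial (a + b) x = (\<Prod>v\<in>?S. x v ^ Poly_Mapping.lookup (a + b) v)"
    by (intro eval_monomial_eq_prod) (simp_all add: keys_add)
  also have "\<dots> = (\<Prod>v\<in>?S. x v ^ Poly_Mapping.lookup a v) * (\<Prod>v\<in>?S. x v ^ Poly_Mapping.lookup b v)"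
    by (simp add: lookup_add power_add prod.distrib)
  also have "\<dots> = eval_monomial a x * eval_monomial b x"
    by (subst (1 2) eval_monomial_eq_prod[of ?S]) auto
  finally show ?thesis .
qed

lemma eval_monomial_scale:
  "eval_monomial mo (\<lambda>i. g i * x i) = eval_monomial mo g * eval_monomial mo x"
  by (simp add: eval_monomial_def power_mult_distrib prod.distrib)

definition weighted_degree :: "(nat \<Rightarrow> nat) \<Rightarrow> (nat \<Rightarrow>\<^sub>0 nat) \<Rightarrow> nat" where
  "weighted_degree w mo = (\<Sum>v\<in>Poly_Mapping.keys mo. w v * Poly_Mapping.lookup mo v)"

abbreviation total_degree :: "(nat \<Rightarrow>\<^sub>0 nat) \<Rightarrow> nat" where
  "total_degree \<equiv> weighted_degree (\<lambda>_. 1)"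

lemma weighted_degree_eq_sum:
  assumes "finite S" "Poly_Mapping.keys mo \<subseteq> S"
  shows "weighted_degree w mo = (\<Sum>v\<in>S. w v * Poly_Mapping.lookup mo v)"
  unfolding weighted_degree_def
  by (rule sum.mono_neutral_left) (use assms in \<open>auto simp: in_keys_iff\<close>)

lemma weighted_degree_add: "weighted_degree w (a + b) = weighted_degree w a + weighted_degree w b"
proof -
  let ?S = "Poly_Mapping.keys a \<union> Poly_Mapping.keys b"
  have "weighted_degree w (a + b) = (\<Sum>v\<in>?S. w v * Poly_Mapping.lookup (a + b) v)"
    by (intro weighted_degree_eq_sum) (simp_all add: keys_add)
  also have "\<dots> = (\<Sum>v\<in>?S. w v * Poly_Mapping.lookup a v) + (\<Sum>v\<in>?S. w v * Poly_Mapping.lookup b v)"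
    by (simp add: lookup_add distrib_left sum.distrib)
  also have "\<dots> = weighted_degree w a + weighted_degree w b"
    by (subst (1 2) weighted_degree_eq_sum[of ?S]) auto
  finally show ?thesis .
qed

lemma lookup_le_total_degree: "Poly_Mapping.lookup mo v \<le> total_degree mo"
  by (cases "v \<in> Poly_Mapping.keys mo")
    (auto simp: weighted_degree_def in_keys_iff intro: member_le_sum)

lemma total_degree_pos: "mo \<noteq> 0 \<Longrightarrow> total_degree mo > 0"
  by (metis all_not_in_conv in_keys_iff keys_eq_empty lookup_le_total_degree not_gr_zero le_zero_eq)

lemma eval_monomial_Kronecker:
  "eval_monomial mo (\<lambda>v. t ^ (B ^ v)) = t ^ weighted_degree (\<lambda>v. B ^ v) mo"
  by (simp add: eval_monomial_def weighted_degree_def power_sum power_mult[symmetric])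

lemma base_expansion_unique:
  fixes e e' :: "nat \<Rightarrow> nat"
  assumes "\<And>u. e u < B" "\<And>u. e' u < B" "(\<Sum>u<R. B ^ u * e u) = (\<Sum>u<R. B ^ u * e' u)" "u < R"
  shows "e u = e' u"
  using assms
proof (induction R arbitrary: e e' u)
  case 0
  then show ?case by simp
next
  case (Suc R)
  have expand: "e 0 + B * (\<Sum>u<R. B ^ u * e (Suc u)) = e' 0 + B * (\<Sum>u<R. B ^ u * e' (Suc u))"
    using Suc.prems(3)
    by (simp add: sum.lessThan_Suc_shift sum_distrib_left mult_ac del: sum.lessThan_Suc)
  then have "(e 0 + B * (\<Sum>u<R. B ^ u * e (Suc u))) mod B = (e' 0 + B * (\<Sum>u<R. B ^ u * e' (Suc u))) mod B"
    by simp
  then have lowest: "e 0 = e' 0"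
    using Suc.prems(1,2) by simp
  have "B > 0"
    using Suc.prems(1) by (metis gr_zeroI not_less_zero)
  with expand lowest have "(\<Sum>u<R. B ^ u * e (Suc u)) = (\<Sum>u<R. B ^ u * e' (Suc u))"
    by simp
  then have "e (Suc u') = e' (Suc u')" if "u' < R" for u'
    using Suc.IH[of "\<lambda>u. e (Suc u)" "\<lambda>u. e' (Suc u)"] Suc.prems(1,2) that by blast
  with lowest Suc.prems(4) show ?case
    by (cases u) auto
qed

lemma weighted_degree_powers_inj:
  assumes "\<And>v. Poly_Mapping.lookup a v < B" "\<And>v. Poly_Mapping.lookup b v < B"
    and "weighted_degree (\<lambda>v. B ^ v) a = weighted_degree (\<lambda>v. B ^ v) b"
  shows "a = b"
proof (rule poly_mapping_eqI)
  fix v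
  obtain R where R: "Poly_Mapping.keys a \<union> Poly_Mapping.keys b \<subseteq> {..<R}"
    using finite_nat_bounded[of "Poly_Mapping.keys a \<union> Poly_Mapping.keys b"] by auto
  show "Poly_Mapping.lookup a v = Poly_Mapping.lookup b v"
  proof (cases "v < R")
    case True
    have "(\<Sum>u<R. B ^ u * Poly_Mapping.lookup a u) = (\<Sum>u<R. B ^ u * Poly_Mapping.lookup b u)"
      using assms(3) R by (simp add: weighted_degree_eq_sum[of "{..<R}"])
    then show ?thesis
      using assms(1,2) True
      by (intro base_expansion_unique[where e = "Poly_Mapping.lookup a" and e' = "Poly_Mapping.lookup b"])
  next
    case False
    then have "v \<notin> Poly_Mapping.keys a" "v \<notin> Poly_Mapping.keys b"
      using R by auto
    then show ?thesis
      by (simp add: in_keys_iff)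
  qed
qed

(* Kronecker substitution x_v = t^(B^v), with B exceeding every exponent occurring in S, sends
   distinct monomials of S to distinct powers of t. *)
lemma monomials_linear_independent:
  fixes d :: "(nat \<Rightarrow>\<^sub>0 nat) \<Rightarrow> 'a::{idom,ring_char_0}"
  assumes "finite S" and vanish: "\<And>x. (\<Sum>mo\<in>S. d mo * eval_monomial mo x) = 0" and "m \<in> S"
  shows "d m = 0"
proof -
  define B where "B = Suc (\<Sum>mo\<in>S. total_degree mo)"
  have small: "Poly_Mapping.lookup mo v < B" if "mo \<in> S" for mo v
  proof -
    have "Poly_Mapping.lookup mo v \<le> total_degree mo"
      by (rule lookup_le_total_degree)
    also have "\<dots> \<le> (\<Sum>mo\<in>S. total_degree mo)"
      using \<open>finite S\<close> that by (intro member_le_sum) auto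
    finally show ?thesis
      unfolding B_def by simp
  qed
  let ?kr = "weighted_degree (\<lambda>v. B ^ v)"
  define Q where "Q = (\<Sum>mo\<in>S. monom (d mo) (?kr mo))"
  have "poly Q t = (\<Sum>mo\<in>S. d mo * eval_monomial mo (\<lambda>v. t ^ (B ^ v)))" for t
    by (simp add: Q_def poly_sum poly_monom eval_monomial_Kronecker)
  then have "Q = 0"
    using vanish poly_all_0_iff_0 by metis
  then have "0 = coeff Q (?kr m)"
    by simp
  also have "\<dots> = (\<Sum>mo\<in>S. if mo = m then d mo else 0)"
    unfolding Q_def coeff_sum coeff_monom
  proof (rule sum.cong)
    fix mo assume "mo \<in> S"
    then have "?kr mo = ?kr m \<longleftrightarrow> mo = m"
      using small \<open>m \<in> S\<close> weighted_degree_powers_inj by metis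
    then show "(if ?kr mo = ?kr m then d mo else 0) = (if mo = m then d mo else 0)"
      by simp
  qed simp
  also have "\<dots> = d m"
    using \<open>finite S\<close> \<open>m \<in> S\<close> by simp
  finally show ?thesis
    by simp
qed

lemma peval_eq_sum:
  assumes "finite S" "Poly_Mapping.keys p \<subseteq> S"
  shows "peval p x = (\<Sum>mo\<in>S. of_real (Poly_Mapping.lookup p mo) * eval_monomial mo x)"
  unfolding peval_def eval_monomial_def[symmetric]
  by (rule sum.mono_neutral_left) (use assms in \<open>auto simp: in_keys_iff\<close>)

lemma peval_add: "peval (p + q) x = peval p x + peval q x"
proof -
  let ?S = "Poly_Mapping.keys p \<union> Poly_Mapping.keys q"
  have "peval (p + q) x = (\<Sum>mo\<in>?S. of_real (Poly_Mapping.lookup (p + q) mo) * eval_monomial mo x)"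
    by (intro peval_eq_sum) (simp_all add: keys_add)
  also have "\<dots> = (\<Sum>mo\<in>?S. of_real (Poly_Mapping.lookup p mo) * eval_monomial mo x)
      + (\<Sum>mo\<in>?S. of_real (Poly_Mapping.lookup q mo) * eval_monomial mo x)"
    by (simp add: lookup_add sum.distrib distrib_right)
  also have "\<dots> = peval p x + peval q x"
    by (subst (1 2) peval_eq_sum[of ?S]) auto
  finally show ?thesis .
qed

lemma peval_diff: "peval (p - q) x = peval p x - peval q x"
  using peval_add[of "p - q" q x] by simp

lemma peval_single: "peval (Poly_Mapping.single mo c) x = of_real c * eval_monomial mo x"
  by (simp add: peval_def eval_monomial_def)

lemma lookup_single_mult_add:
  "Poly_Mapping.lookup (Poly_Mapping.single s c * p) (s + k) = c * Poly_Mapping.lookup p k"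
  for p :: "('a::cancel_comm_monoid_add \<Rightarrow>\<^sub>0 'b::comm_semiring_0)"
proof -
  have "Poly_Mapping.lookup (Poly_Mapping.single s c * p) k' = Sum_any (\<lambda>q. c * Poly_Mapping.lookup p q when k' = s + q)" for k'
    by (simp add: lookup_mult lookup_single when_mult mult_when Sum_any_right_distrib)
  then show ?thesis
    by (simp add: when_def)
qed

lemma keys_single_mult:
  fixes p :: "('a::cancel_comm_monoid_add \<Rightarrow>\<^sub>0 'b::{comm_semiring_0,semiring_no_zero_divisors})"
  assumes "c \<noteq> 0"
  shows "Poly_Mapping.keys (Poly_Mapping.single s c * p) = (+) s ` Poly_Mapping.keys p"
proof
  show "Poly_Mapping.keys (Poly_Mapping.single s c * p) \<subseteq> (+) s ` Poly_Mapping.keys p"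
    using keys_mult[of "Poly_Mapping.single s c" p] by (auto split: if_splits)
  show "(+) s ` Poly_Mapping.keys p \<subseteq> Poly_Mapping.keys (Poly_Mapping.single s c * p)"
    using assms by (auto simp: in_keys_iff lookup_single_mult_add)
qed

lemma peval_single_mult:
  "peval (Poly_Mapping.single s c * p) x = of_real c * eval_monomial s x * peval p x"
proof (cases "c = 0")
  case True
  then show ?thesis
    by (simp add: peval_def)
next
  case False
  have "peval (Poly_Mapping.single s c * p) x = (\<Sum>mo\<in>(+) s ` Poly_Mapping.keys p.
      of_real (Poly_Mapping.lookup (Poly_Mapping.single s c * p) mo) * eval_monomial mo x)"
    by (rule peval_eq_sum) (simp_all add: keys_single_mult[OF False])
  also have "\<dots> = (\<Sum>k\<in>Poly_Mapping.keys p. of_real (c * Poly_Mapping.lookup p k) * eval_monomial (s + k) x)"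
    by (simp add: sum.reindex inj_on_def lookup_single_mult_add)
  also have "\<dots> = of_real c * eval_monomial s x * peval p x"
    by (simp add: peval_def eval_monomial_def[symmetric] eval_monomial_add sum_distrib_left mult_ac)
  finally show ?thesis .
qed

lemma invariant_imp_eval_monomial_eq_1:
  assumes "invariant G f" "mo \<in> Poly_Mapping.keys f" "g \<in> G"
  shows "eval_monomial mo g = 1"
proof -
  define d where "d mo = complex_of_real (Poly_Mapping.lookup f mo) * (eval_monomial mo g - 1)" for mo
  have "(\<Sum>mo\<in>Poly_Mapping.keys f. d mo * eval_monomial mo x) = 0" for x
  proof -
    have "(\<Sum>mo\<in>Poly_Mapping.keys f. d mo * eval_monomial mo x) = peval f (\<lambda>i. g i * x i) - peval f x"
      unfolding peval_def eval_monomial_def[symmetric] eval_monomial_scale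
      by (simp add: d_def algebra_simps sum_subtractf)
    also have "\<dots> = 0"
      using assms(1,3) unfolding invariant_def by simp
    finally show ?thesis .
  qed
  then have "d mo = 0"
    using monomials_linear_independent[of "Poly_Mapping.keys f" d mo] assms(2) by simp
  with assms(2) show ?thesis
    by (simp add: d_def in_keys_iff)
qed

lemma keys_add_disjoint:
  fixes p q :: "'a \<Rightarrow>\<^sub>0 'b::monoid_add"
  assumes "Poly_Mapping.keys p \<inter> Poly_Mapping.keys q = {}"
  shows "Poly_Mapping.keys (p + q) = Poly_Mapping.keys p \<union> Poly_Mapping.keys q"
proof (intro subset_antisym keys_add subsetI)
  fix x assume "x \<in> Poly_Mapping.keys p \<union> Poly_Mapping.keys q"
  with assms show "x \<in> Poly_Mapping.keys (p + q)"
    by (cases "x \<in> Poly_Mapping.keys p") (auto simp: in_keys_iff lookup_add disjoint_iff)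
qed

lemma keys_diff_single:
  fixes p :: "'a \<Rightarrow>\<^sub>0 'b::ab_group_add"
  shows "Poly_Mapping.keys (p - Poly_Mapping.single m l) =
    (if Poly_Mapping.lookup p m = l then Poly_Mapping.keys p - {m} else insert m (Poly_Mapping.keys p))"
  by (auto simp: in_keys_iff lookup_minus lookup_single when_def split: if_splits)

lemma zero_eq_add_iff: "(0 :: nat \<Rightarrow>\<^sub>0 nat) = a + b \<longleftrightarrow> a = 0 \<and> b = 0"
  by (metis add_eq_0_iff_both_eq_0 add_0 lookup_add lookup_zero poly_mapping_eqI)

lemma lookup_mult_zero:
  fixes p q :: "(nat \<Rightarrow>\<^sub>0 nat) \<Rightarrow>\<^sub>0 'b::comm_semiring_0"
  shows "Poly_Mapping.lookup (p * q) 0 = Poly_Mapping.lookup p 0 * Poly_Mapping.lookup q 0"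
proof -
  have "Sum_any (\<lambda>b. Poly_Mapping.lookup q b when 0 = a + b) = (Poly_Mapping.lookup q 0 when a = 0)" for a
    by (cases "a = 0") (simp_all add: zero_eq_add_iff)
  then show ?thesis
    by (simp add: lookup_mult mult_when)
qed

lemma lookup_mult_nonneg:
  fixes p q :: "'a::comm_monoid_add \<Rightarrow>\<^sub>0 'b::{comm_semiring_0,ordered_semiring_0}"
  assumes "\<And>k. 0 \<le> Poly_Mapping.lookup p k" "\<And>k. 0 \<le> Poly_Mapping.lookup q k"
  shows "0 \<le> Poly_Mapping.lookup (p * q) k"
  unfolding lookup_mult Sum_any.expand_set
  using assms by (intro sum_nonneg mult_nonneg_nonneg) (simp_all add: when_def)

lemma in_vars_add: "in_vars n p \<Longrightarrow> in_vars n q \<Longrightarrow> in_vars n (p + q)"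
  using keys_add[of p q] unfolding in_vars_def by blast

lemma in_vars_diff: "in_vars n p \<Longrightarrow> in_vars n q \<Longrightarrow> in_vars n (p - q)"
  using keys_diff[of p q] unfolding in_vars_def by blast

lemma in_vars_mult:
  assumes "in_vars n p" "in_vars n q"
  shows "in_vars n (p * q)"
  unfolding in_vars_def
proof
  fix K assume "K \<in> Poly_Mapping.keys (p * q)"
  then obtain a b where "K = a + b" "a \<in> Poly_Mapping.keys p" "b \<in> Poly_Mapping.keys q"
    using keys_mult[of p q] by blast
  with assms show "Poly_Mapping.keys K \<subseteq> {..<n}"
    using keys_add[of a b] unfolding in_vars_def by blast
qed

lemma in_vars_single: "Poly_Mapping.keys m \<subseteq> {..<n} \<Longrightarrow> in_vars n (Poly_Mapping.single m l)"
  by (simp add: in_vars_def)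

(* D'Angelo's partial tensor operation, iterated: the term M of f is replaced by M times the
   previous stage. *)
primrec partial_tensor :: "rpoly \<Rightarrow> rpoly \<Rightarrow> nat \<Rightarrow> rpoly" where
  "partial_tensor f M 0 = f"
| "partial_tensor f M (Suc k) = f - M + M * partial_tensor f M k"

lemma in_vars_partial_tensor:
  "in_vars n f \<Longrightarrow> in_vars n M \<Longrightarrow> in_vars n (partial_tensor f M k)"
  by (induction k) (simp_all add: in_vars_add in_vars_diff in_vars_mult)

lemma lookup_partial_tensor_nonneg:
  assumes "\<And>K. 0 \<le> Poly_Mapping.lookup M K" "\<And>K. Poly_Mapping.lookup M K \<le> Poly_Mapping.lookup f K"
  shows "0 \<le> Poly_Mapping.lookup (partial_tensor f M k) K"
proof (induction k arbitrary: K)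
  case 0
  show ?case
    using assms(1)[of K] assms(2)[of K] by simp
next
  case (Suc k)
  have "0 \<le> Poly_Mapping.lookup (f - M) K"
    using assms(2) by (simp add: lookup_minus)
  moreover have "0 \<le> Poly_Mapping.lookup (M * partial_tensor f M k) K"
    using assms(1) Suc.IH by (rule lookup_mult_nonneg)
  ultimately show ?case
    by (simp add: lookup_add)
qed

lemma lookup_partial_tensor_zero:
  "Poly_Mapping.lookup f 0 = 0 \<Longrightarrow> Poly_Mapping.lookup M 0 = 0 \<Longrightarrow>
    Poly_Mapping.lookup (partial_tensor f M k) 0 = 0"
  by (induction k) (simp_all add: lookup_add lookup_minus lookup_mult_zero)

lemma peval_partial_tensor_Suc:
  "peval (partial_tensor f (Poly_Mapping.single m l) (Suc k)) x =
    peval f x - of_real l * eval_monomial m x * (1 - peval (partial_tensor f (Poly_Mapping.single m l) k) x)"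
  by (simp add: peval_add peval_diff peval_single peval_single_mult right_diff_distrib)

lemma peval_partial_tensor_eq_1:
  "peval f x = 1 \<Longrightarrow> peval (partial_tensor f (Poly_Mapping.single m l) k) x = 1"
  by (induction k) (simp_all add: peval_partial_tensor_Suc del: partial_tensor.simps(2))

lemma peval_partial_tensor_scale:
  assumes "\<And>x. peval f (\<lambda>i. g i * x i) = peval f x" "eval_monomial m g = 1"
  shows "peval (partial_tensor f (Poly_Mapping.single m l) k) (\<lambda>i. g i * x i) =
    peval (partial_tensor f (Poly_Mapping.single m l) k) x"
  by (induction k) (simp_all add: peval_partial_tensor_Suc assms eval_monomial_scale del: partial_tensor.simps(2))

lemma invariant_partial_tensor:
  assumes "invariant G f" "m \<in> Poly_Mapping.keys f"
  shows "invariant G (partial_tensor f (Poly_Mapping.single m l) k)"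
  unfolding invariant_def
proof (intro ballI allI)
  fix g :: "nat \<Rightarrow> complex" and x assume "g \<in> G"
  with assms show "peval (partial_tensor f (Poly_Mapping.single m l) k) (\<lambda>i. g i * x i) =
      peval (partial_tensor f (Poly_Mapping.single m l) k) x"
    by (intro peval_partial_tensor_scale invariant_imp_eval_monomial_eq_1)
      (auto simp: invariant_def)
qed

lemma good_partial_tensor:
  assumes "good n f" "m \<in> Poly_Mapping.keys f" "0 \<le> l" "l \<le> Poly_Mapping.lookup f m"
  shows "good n (partial_tensor f (Poly_Mapping.single m l) k)"
proof -
  let ?M = "Poly_Mapping.single m l"
  have f: "in_vars n f" "\<And>x::nat \<Rightarrow> real. (\<Sum>i<n. x i) = 1 \<Longrightarrow> peval f x = 1"
    "\<And>K. 0 \<le> Poly_Mapping.lookup f K" "Poly_Mapping.lookup f 0 = 0"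
    using assms(1) by (auto simp: good_def)
  have "m \<noteq> 0"
    using assms(2) f(4) by (auto simp: in_keys_iff)
  have "in_vars n ?M"
    using f(1) assms(2) by (intro in_vars_single) (auto simp: in_vars_def)
  moreover have "0 \<le> Poly_Mapping.lookup ?M K" "Poly_Mapping.lookup ?M K \<le> Poly_Mapping.lookup f K" for K
    using assms(3,4) f(3) by (auto simp: lookup_single when_def)
  moreover have "Poly_Mapping.lookup ?M 0 = 0"
    using \<open>m \<noteq> 0\<close> by (simp add: lookup_single)
  ultimately show ?thesis
    using f unfolding good_def
    by (simp add: in_vars_partial_tensor lookup_partial_tensor_nonneg lookup_partial_tensor_zero
        peval_partial_tensor_eq_1)
qed

lemma good_nonzero: "good n f \<Longrightarrow> 0 < n \<Longrightarrow> f \<noteq> 0"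
proof
  assume "good n f" "0 < n" "f = 0"
  have "(\<Sum>i<n. if i = 0 then 1 else 0 :: real) = 1"
    using \<open>0 < n\<close> by simp
  with \<open>good n f\<close> have "peval f (\<lambda>i. if i = 0 then 1 else 0 :: real) = 1"
    by (simp add: good_def)
  with \<open>f = 0\<close> show False
    by (simp add: peval_def)
qed

lemma obtain_key_max_total_degree:
  assumes "p \<noteq> 0"
  obtains m where "m \<in> Poly_Mapping.keys p"
    and "\<And>K. K \<in> Poly_Mapping.keys p \<Longrightarrow> total_degree K \<le> total_degree m"
proof -
  obtain m where "m \<in> Poly_Mapping.keys p" "Max (total_degree ` Poly_Mapping.keys p) = total_degree m"
    by (rule obtains_MAX[OF finite_keys]) (use assms in simp)
  then show ?thesis
    by (metis that Max_ge finite_imageI finite_keys imageI)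
qed

lemma keys_partial_tensor_Suc:
  assumes "m \<in> Poly_Mapping.keys f" "\<And>K. K \<in> Poly_Mapping.keys f \<Longrightarrow> total_degree K \<le> total_degree m"
    and "Poly_Mapping.lookup f 0 = 0" "l \<noteq> 0"
  shows "Poly_Mapping.keys (f - Poly_Mapping.single m l)
      \<inter> (+) m ` Poly_Mapping.keys (partial_tensor f (Poly_Mapping.single m l) k) = {}"
    and "Poly_Mapping.keys (partial_tensor f (Poly_Mapping.single m l) (Suc k)) =
      Poly_Mapping.keys (f - Poly_Mapping.single m l)
      \<union> (+) m ` Poly_Mapping.keys (partial_tensor f (Poly_Mapping.single m l) k)"
proof -
  let ?M = "Poly_Mapping.single m l" and ?P = "partial_tensor f (Poly_Mapping.single m l) k"
  have "m \<noteq> 0"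
    using assms(1,3) by (auto simp: in_keys_iff)
  then have "Poly_Mapping.lookup ?P 0 = 0"
    using assms(3) by (intro lookup_partial_tensor_zero) (simp_all add: lookup_single)
  then have high: "total_degree m < total_degree (m + K)" if "K \<in> Poly_Mapping.keys ?P" for K
    using that total_degree_pos[of K] by (auto simp: weighted_degree_add in_keys_iff)
  have low: "total_degree K \<le> total_degree m" if "K \<in> Poly_Mapping.keys (f - ?M)" for K
    using that assms(1,2) by (auto simp: keys_diff_single split: if_splits)
  show disjoint: "Poly_Mapping.keys (f - ?M) \<inter> (+) m ` Poly_Mapping.keys ?P = {}"
    using low high by fastforce
  show "Poly_Mapping.keys (partial_tensor f ?M (Suc k)) =
      Poly_Mapping.keys (f - ?M) \<union> (+) m ` Poly_Mapping.keys ?P"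
    using keys_add_disjoint[OF disjoint[folded keys_single_mult[OF assms(4)]]]
    by (simp add: keys_single_mult[OF assms(4)])
qed

lemma nmon_partial_tensor:
  assumes "m \<in> Poly_Mapping.keys f" "\<And>K. K \<in> Poly_Mapping.keys f \<Longrightarrow> total_degree K \<le> total_degree m"
    and "Poly_Mapping.lookup f 0 = 0" "l \<noteq> 0"
  shows "nmon (partial_tensor f (Poly_Mapping.single m l) k) = nmon f + k * nmon (f - Poly_Mapping.single m l)"
proof (induction k)
  case 0
  then show ?case
    by simp
next
  case (Suc k)
  let ?P = "partial_tensor f (Poly_Mapping.single m l) k"
  have "card ((+) m ` Poly_Mapping.keys ?P) = nmon ?P"
    by (simp add: card_image nmon_def)
  with Suc.IH show ?case
    using keys_partial_tensor_Suc[OF assms, of k]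
    by (simp add: nmon_def card_Un_disjoint)
qed

theorem proposition2p2:
  fixes n a :: nat and f :: rpoly
  assumes "n \<in> {1, 2, 3}"
    and "good n f"
    and "a > 0"
  shows "(\<exists>g h. good n g \<and> good n h \<and> nmon g = a * nmon f \<and> nmon h = a * nmon f - (a - 1))
    \<and> (\<forall>G. diag_unitary_group n G \<and> invariant G f \<longrightarrow>
          (\<exists>g h. good n g \<and> good n h \<and> nmon g = a * nmon f \<and> nmon h = a * nmon f - (a - 1)
                 \<and> invariant G g \<and> invariant G h))"
proof -
  have "f \<noteq> 0"
    using good_nonzero[OF assms(2)] assms(1) by auto
  then obtain m where m: "m \<in> Poly_Mapping.keys f"
    and top: "\<And>K. K \<in> Poly_Mapping.keys f \<Longrightarrow> total_degree K \<le> total_degree m"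
    using obtain_key_max_total_degree by blast
  define c where "c = Poly_Mapping.lookup f m"
  have "0 < c" "Poly_Mapping.lookup f 0 = 0"
    using assms(2) m unfolding c_def good_def in_keys_iff by (metis order_less_le)+
  define g where "g = partial_tensor f (Poly_Mapping.single m (c / 2)) (a - 1)"
  define h where "h = partial_tensor f (Poly_Mapping.single m c) (a - 1)"
  have "good n g" "good n h"
    unfolding g_def h_def using assms(2) m \<open>0 < c\<close>
    by (simp_all add: good_partial_tensor c_def)
  have "nmon (f - Poly_Mapping.single m (c / 2)) = nmon f" "nmon (f - Poly_Mapping.single m c) = nmon f - 1"
    using m \<open>0 < c\<close> by (simp_all add: nmon_def keys_diff_single c_def insert_absorb)
  then have "nmon g = nmon f + (a - 1) * nmon f" "nmon h = nmon f + (a - 1) * (nmon f - 1)"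
    unfolding g_def h_def using \<open>0 < c\<close>
    by (simp_all add: nmon_partial_tensor[OF m top \<open>Poly_Mapping.lookup f 0 = 0\<close>])
  moreover have "0 < nmon f"
    using \<open>f \<noteq> 0\<close> by (simp add: nmon_def card_gt_0_iff)
  ultimately have "nmon g = a * nmon f" "nmon h = a * nmon f - (a - 1)"
    using assms(3) by (cases a; cases "nmon f"; simp)+
  moreover have "invariant G g" "invariant G h" if "invariant G f" for G
    unfolding g_def h_def using that m by (simp_all add: invariant_partial_tensor)
  ultimately show ?thesis
    using \<open>good n g\<close> \<open>good n h\<close> by blast
qed

end
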